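(* Let $A=\{0,1,2\}$ and let $T\colon A^4\to A$ be given by $T(1,1,2,2)=T(1,2,1,2)=1$ and $T(\mathbf{x})=0$ for all other $\mathbf{x}\in A^4$. Let $g\in\{T\}^{*(1)*(2)}$. Then: (a) if $g(1,2)=2$ then $g(0,a)=a$ for all $a\in A$; (b) if $g(2,1)=2$ then $g(a,0)=a$ for all $a\in A$; (c) if $g(1,2)\in\{0,1\}$ then $g(0,a)=0$ for all $a\in A$; (d) if $g(2,1)\in\{0,1\}$ then $g(a,0)=0$ for all $a\in A$.
   Context: An $m$-ary $g$ commutes with an $n$-ary $h$ if $g\bigl((h((x_{ij})_{j}))_{i}\bigr)=h\bigl((g((x_{ij})_{i}))_{j}\bigr)$ for all $(x_{ij})\in A^{m\times n}$. For a set $F$ of finitary operations on $A$ (positive arity), $F^*$ is the set of all such operations commuting with every member of $F$, and $F^{(n)}$ is the set of $n$-ary members of $F$; superscripts apply from left to right, so $\{T\}^{*(1)*(2)}=(((\{T\}^* )^{(1)})^* )^{(2)}$. *)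

theory Defs
  imports Main
begin

text \<open>An operation is a pair
  (n, f) of its arity n and a function f on argument lists; only the values of f
  on lists of length n with entries in A matter.\<close>

type_synonym operation = "nat \<times> (nat list \<Rightarrow> nat)"

definition is_op :: "nat set \<Rightarrow> nat \<Rightarrow> (nat list \<Rightarrow> nat) \<Rightarrow> bool" where
  "is_op A n f \<longleftrightarrow> (\<forall>xs. length xs = n \<and> set xs \<subseteq> A \<longrightarrow> f xs \<in> A)"

definition commutes :: "nat set \<Rightarrow> nat \<Rightarrow> (nat list \<Rightarrow> nat) \<Rightarrow> nat \<Rightarrow> (nat list \<Rightarrow> nat) \<Rightarrow> bool" where
  "commutes A m g n h \<longleftrightarrow>
     (\<forall>x :: nat \<Rightarrow> nat \<Rightarrow> nat. (\<forall>i<m. \<forall>j<n. x i j \<in> A) \<longrightarrow>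
        g (map (\<lambda>i. h (map (\<lambda>j. x i j) [0..<n])) [0..<m])
      = h (map (\<lambda>j. g (map (\<lambda>i. x i j) [0..<m])) [0..<n]))"

definition centralizer :: "nat set \<Rightarrow> operation set \<Rightarrow> operation set" where
  "centralizer A F = {(m, g). 0 < m \<and> is_op A m g \<and> (\<forall>(n, h)\<in>F. commutes A m g n h)}"

definition arity_part :: "operation set \<Rightarrow> nat \<Rightarrow> operation set" where
  "arity_part F n = {(m, g) \<in> F. m = n}"

definition A3 :: "nat set" where "A3 = {0, 1, 2}"

definition Top :: "nat list \<Rightarrow> nat" where
  "Top xs = (if xs = [1,1,2,2] \<or> xs = [1,2,1,2] then 1 else 0)"

end

theory Submission
  imports Defs
begin

text \<open>For c \<in> A the unary map e_c sending 2 to c and everything else to 0 commutes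
  with T: T never takes the value 2, and a tuple with entries in {0, c} never contains both
  1 and 2, so both sides vanish. Hence every binary g in {T}*(1)* satisfies
  g(e_c a, e_c b) = e_c (g(a, b)); taking (a, b) = (1, 2) gives g(0, c) = e_c (g(1, 2)),
  and (a, b) = (2, 1) gives the symmetric statement.\<close>

lemma commutes_sym: "commutes A m g n h \<longleftrightarrow> commutes A n h m g"
proof -
  have "commutes A n h m g" if "commutes A m g n h" for m g n h
    unfolding commutes_def
  proof (intro allI impI)
    fix x :: "nat \<Rightarrow> nat \<Rightarrow> nat"
    assume "\<forall>i<n. \<forall>j<m. x i j \<in> A"
    then have "\<forall>j<m. \<forall>i<n. x i j \<in> A" by blast
    with that show "h (map (\<lambda>i. g (map (x i) [0..<m])) [0..<n])
        = g (map (\<lambda>j. h (map (\<lambda>i. x i j) [0..<n])) [0..<m])"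
      unfolding commutes_def by (drule_tac x = "\<lambda>j i. x i j" in spec) simp
  qed
  then show ?thesis by blast
qed

lemma commutes_unary_iff:
  "commutes A n h 1 f \<longleftrightarrow>
     (\<forall>xs. length xs = n \<and> set xs \<subseteq> A \<longrightarrow> h (map (\<lambda>x. f [x]) xs) = f [h xs])"
proof
  assume comm: "commutes A n h 1 f"
  show "\<forall>xs. length xs = n \<and> set xs \<subseteq> A \<longrightarrow> h (map (\<lambda>x. f [x]) xs) = f [h xs]"
  proof (intro allI impI)
    fix xs :: "nat list"
    assume xs: "length xs = n \<and> set xs \<subseteq> A"
    have "h (map (\<lambda>i. f [xs ! i]) [0..<n]) = f [h (map (\<lambda>i. xs ! i) [0..<n])]"
      using comm xs unfolding commutes_def
      by (drule_tac x = "\<lambda>i j. xs ! i" in spec) auto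
    moreover have "map (\<lambda>i. f [xs ! i]) [0..<n] = map (\<lambda>x. f [x]) xs"
      using xs by (simp add: list_eq_iff_nth_eq)
    moreover have "map (\<lambda>i. xs ! i) [0..<n] = xs"
      using xs by (simp add: list_eq_iff_nth_eq)
    ultimately show "h (map (\<lambda>x. f [x]) xs) = f [h xs]" by simp
  qed
next
  assume endo: "\<forall>xs. length xs = n \<and> set xs \<subseteq> A \<longrightarrow> h (map (\<lambda>x. f [x]) xs) = f [h xs]"
  show "commutes A n h 1 f"
    unfolding commutes_def
  proof (intro allI impI)
    fix x :: "nat \<Rightarrow> nat \<Rightarrow> nat"
    assume "\<forall>i<n. \<forall>j<1. x i j \<in> A"
    then have "set (map (\<lambda>i. x i 0) [0..<n]) \<subseteq> A" by auto
    then have "h (map (\<lambda>y. f [y]) (map (\<lambda>i. x i 0) [0..<n])) = f [h (map (\<lambda>i. x i 0) [0..<n])]"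
      by (intro endo[rule_format]) simp
    then show "h (map (\<lambda>i. f (map (x i) [0..<1])) [0..<n])
        = f (map (\<lambda>j. h (map (\<lambda>i. x i j) [0..<n])) [0..<1])"
      by (simp add: comp_def)
  qed
qed

lemma commutes_if_mem_centralizer:
  "(m, g) \<in> centralizer A F \<Longrightarrow> (n, h) \<in> F \<Longrightarrow> commutes A m g n h"
  unfolding centralizer_def by fast

definition two_to :: "nat \<Rightarrow> nat \<Rightarrow> nat" where
  "two_to c x = (if x = 2 then c else 0)"

lemma Top_map_two_to: "Top (map (two_to c) xs) = 0"
  unfolding Top_def two_to_def by (auto split: if_splits)

lemma two_to_Top: "two_to c (Top xs) = 0"
  unfolding Top_def two_to_def by simp

lemma two_to_in_centralizer_Top:
  assumes "c \<in> A3"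
  shows "(1, \<lambda>xs. two_to c (hd xs)) \<in> arity_part (centralizer A3 {(4, Top)}) 1"
proof -
  have "is_op A3 1 (\<lambda>xs. two_to c (hd xs))"
    using assms unfolding is_op_def two_to_def A3_def by auto
  moreover have "commutes A3 1 (\<lambda>xs. two_to c (hd xs)) 4 Top"
    unfolding commutes_sym[of _ 1] commutes_unary_iff
    by (simp add: Top_map_two_to two_to_Top)
  ultimately show ?thesis unfolding arity_part_def centralizer_def by simp
qed

lemma bicentralizer_Top_commutes_two_to:
  assumes g: "(m, g) \<in> centralizer A3 (arity_part (centralizer A3 {(4, Top)}) 1)"
    and c: "c \<in> A3" and xs: "length xs = m" "set xs \<subseteq> A3"
  shows "g (map (two_to c) xs) = two_to c (g xs)"
  using commutes_if_mem_centralizer[OF g two_to_in_centralizer_Top[OF c]] xs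
  unfolding commutes_unary_iff by (simp add: comp_def)

theorem lemma3p9:
  fixes g :: "nat list \<Rightarrow> nat"
  assumes "(2, g) \<in> arity_part (centralizer A3 (arity_part (centralizer A3 {(4, Top)}) 1)) 2"
  shows "(g [1,2] = 2 \<longrightarrow> (\<forall>a\<in>A3. g [0,a] = a))
       \<and> (g [2,1] = 2 \<longrightarrow> (\<forall>a\<in>A3. g [a,0] = a))
       \<and> (g [1,2] \<in> {0,1} \<longrightarrow> (\<forall>a\<in>A3. g [0,a] = 0))
       \<and> (g [2,1] \<in> {0,1} \<longrightarrow> (\<forall>a\<in>A3. g [a,0] = 0))"
proof -
  have g: "(2, g) \<in> centralizer A3 (arity_part (centralizer A3 {(4, Top)}) 1)"
    using assms unfolding arity_part_def by simp
  have "g [0, c] = two_to c (g [1, 2])" if "c \<in> A3" for c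
    using bicentralizer_Top_commutes_two_to[OF g that, of "[1, 2]"] by (simp add: A3_def two_to_def)
  moreover have "g [c, 0] = two_to c (g [2, 1])" if "c \<in> A3" for c
    using bicentralizer_Top_commutes_two_to[OF g that, of "[2, 1]"] by (simp add: A3_def two_to_def)
  ultimately show ?thesis by (auto simp: two_to_def)
qed

end
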